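(* Let $X$ be a Banach space, $\mathfrak{L}$ a metric space of functions on $\mathbb{R}$, and $g\in\mathfrak{L}$ translation compact, with hull $\mathcal{H}(g)$, such that the translations $T(h)$ belong to $\mathcal{C}(\mathcal{H}(g),\mathcal{H}(g))$ for all $h\in\mathbb{R}$. Suppose that for every $f\in\mathcal{H}(g)$ the equation $\frac{d}{dt}u(t)=\mathcal{A}(u(t))+f(t)$ (with $\mathcal{A}$ a densely defined operator on $X$) is well posed for every initial datum $u_0\in X$ at every initial time $\tau\in\mathbb{R}$, generating a process $U_f(t,\tau)$ on $X$ (so $U_f(t,\tau)u_0=u(t)$, the solution with $u(\tau)=u_0$), and that $U_f(h+t,h+\tau)=U_{T(h)f}(t,\tau)$ for all $f\in\mathcal{H}(g)$, $h\in\mathbb{R}$, $t\ge\tau$. If the family $\{U_f(t,\tau)\}_{f\in\mathcal{H}(g)}$ is uniformly totally dissipative and asymptotically closed, then its uniform global attractor satisfies $$A_{\mathcal{H}(g)}=\bigcup_{f\in\mathcal{H}(g)}\{u(0): u \text{ is a complete bounded trajectory of } U_f(t,\tau)\}.$$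
   Context: A process on $X$ is a family of maps $U(t,\tau):X\to X$, $t\ge\tau$, with $U(\tau,\tau)=\mathrm{id}_X$ and $U(t,\tau)=U(t,s)U(s,\tau)$ for $t\ge s\ge\tau$. $g$ is translation compact in $\mathfrak{L}$ if $\{g(\cdot+h):h\in\mathbb{R}\}$ is precompact in $\mathfrak{L}$; its closure in $\mathfrak{L}$ is the hull $\mathcal{H}(g)$ (a compact metric space). $[T(h)f](t)=f(h+t)$. The symbol space of the family is $\Sigma=\mathcal{H}(g)$. For nonempty $B,C\subset X$, $\delta_X(B,C)=\sup_{x\in B}\inf_{\xi\in C}\|x-\xi\|$. A set $K\subset X$ is uniformly attracting if for every bounded $C\subset X$, $\lim_{t-\tau\to\infty}\sup_{f\in\mathcal{H}(g)}\delta_X(U_f(t,\tau)C,K)=0$; the uniform global attractor $A_{\mathcal{H}(g)}$ is the compact uniformly attracting set contained in every compact uniformly attracting set. The family is uniformly totally dissipative if for every $\varepsilon>0$ there is a finite set $M_\varepsilon\subset X$ whose open $\varepsilon$-neighborhood $\mathcal{U}_\varepsilon(M_\varepsilon)$ is uniformly absorbing, i.e. for each bounded $C$ there is $t_e$ with $U_f(t,\tau)C\subset\mathcal{U}_\varepsilon(M_\varepsilon)$ for all $f$ whenever $t-\tau\ge t_e$. The family is asymptotically closed if there is a (finite with at least two terms, or infinite) sequence $0=h_0<h_1<h_2<\cdots$ such that whenever $f_n\to f$ in $\mathcal{H}(g)$ and $U_{f_n}(h_k,0)x_n\to\xi^k\in X$ as $n\to\infty$ for every $k$, then $U_f(h_k,0)\xi^0=\xi^k$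 for every $k$. A complete bounded trajectory of $U_f(t,\tau)$ is a function $u:\mathbb{R}\to X$ with bounded range and $u(s)=U_f(s,\tau)u(\tau)$ for all $s\ge\tau$, $\tau\in\mathbb{R}$. *)

theory Defs
  imports "HOL-Analysis.Analysis"
begin

text \<open>The function space L is modelled as a metric (space, distance) on functions
  real => 'y, packaged in the library type of metrics.  Translation T(h)f = f(h + .).\<close>

definition transl :: "real \<Rightarrow> (real \<Rightarrow> 'y) \<Rightarrow> (real \<Rightarrow> 'y)" where
  "transl h f = (\<lambda>t. f (h + t))"

definition translation_compact :: "(real \<Rightarrow> 'y) metric \<Rightarrow> (real \<Rightarrow> 'y) \<Rightarrow> bool" where
  "translation_compact L g \<longleftrightarrow> g \<in> mspace L \<and>
     (\<forall>h. transl h g \<in> mspace L) \<and>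
     compactin (mtopology_of L) (mtopology_of L closure_of (range (\<lambda>h. transl h g)))"

definition trhull :: "(real \<Rightarrow> 'y) metric \<Rightarrow> (real \<Rightarrow> 'y) \<Rightarrow> (real \<Rightarrow> 'y) set" where
  "trhull L g = mtopology_of L closure_of (range (\<lambda>h. transl h g))"

definition is_process :: "(real \<Rightarrow> real \<Rightarrow> 'x \<Rightarrow> 'x) \<Rightarrow> bool" where
  "is_process V \<longleftrightarrow> (\<forall>\<tau>. V \<tau> \<tau> = id) \<and>
     (\<forall>t s \<tau>. \<tau> \<le> s \<and> s \<le> t \<longrightarrow> V t \<tau> = V t s \<circ> V s \<tau>)"

definition uniformly_attracting ::
  "'f set \<Rightarrow> ('f \<Rightarrow> real \<Rightarrow> real \<Rightarrow> 'x::real_normed_vector \<Rightarrow> 'x) \<Rightarrow> 'x set \<Rightarrow> bool" where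
  "uniformly_attracting \<Sigma> U K \<longleftrightarrow>
     (\<forall>C. bounded C \<and> C \<noteq> {} \<longrightarrow>
        (\<forall>\<epsilon>>0. \<exists>T. \<forall>f\<in>\<Sigma>. \<forall>t \<tau>. t - \<tau> \<ge> T \<longrightarrow>
            (\<forall>x\<in>C. \<exists>\<xi>\<in>K. norm (U f t \<tau> x - \<xi>) < \<epsilon>)))"

definition uniform_global_attractor ::
  "'f set \<Rightarrow> ('f \<Rightarrow> real \<Rightarrow> real \<Rightarrow> 'x::real_normed_vector \<Rightarrow> 'x) \<Rightarrow> 'x set \<Rightarrow> bool" where
  "uniform_global_attractor \<Sigma> U A \<longleftrightarrow>
     compact A \<and> uniformly_attracting \<Sigma> U A \<and>
     (\<forall>K. compact K \<and> uniformly_attracting \<Sigma> U K \<longrightarrow> A \<subseteq> K)"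

definition uniformly_absorbing ::
  "'f set \<Rightarrow> ('f \<Rightarrow> real \<Rightarrow> real \<Rightarrow> 'x::real_normed_vector \<Rightarrow> 'x) \<Rightarrow> 'x set \<Rightarrow> bool" where
  "uniformly_absorbing \<Sigma> U B \<longleftrightarrow>
     (\<forall>C. bounded C \<longrightarrow> (\<exists>te. \<forall>f\<in>\<Sigma>. \<forall>t \<tau>. t - \<tau> \<ge> te \<longrightarrow> U f t \<tau> ` C \<subseteq> B))"

definition uniformly_totally_dissipative ::
  "'f set \<Rightarrow> ('f \<Rightarrow> real \<Rightarrow> real \<Rightarrow> 'x::real_normed_vector \<Rightarrow> 'x) \<Rightarrow> bool" where
  "uniformly_totally_dissipative \<Sigma> U \<longleftrightarrow>
     (\<forall>\<epsilon>>0. \<exists>M. finite M \<and> uniformly_absorbing \<Sigma> U (\<Union>m\<in>M. ball m \<epsilon>))"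

text \<open>The index set I of the sequence 0 = h_0 < h_1 < ... is either {0..<n} with n >= 2
  (finite sequence with at least two terms) or all of nat (infinite sequence).\<close>
definition asymptotically_closed ::
  "(real \<Rightarrow> 'y) metric \<Rightarrow> (real \<Rightarrow> 'y) set \<Rightarrow>
   ((real \<Rightarrow> 'y) \<Rightarrow> real \<Rightarrow> real \<Rightarrow> 'x::topological_space \<Rightarrow> 'x) \<Rightarrow> bool" where
  "asymptotically_closed L \<Sigma> U \<longleftrightarrow>
     (\<exists>I hs. (I = UNIV \<or> (\<exists>n\<ge>2. I = {..<n})) \<and> hs (0::nat) = (0::real) \<and>
        (\<forall>i\<in>I. \<forall>j\<in>I. i < j \<longrightarrow> hs i < hs j) \<and>
        (\<forall>fs f xs \<xi>. (\<forall>n. fs n \<in> \<Sigma>) \<and> f \<in> \<Sigma> \<and>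
            limitin (mtopology_of L) fs f sequentially \<and>
            (\<forall>k\<in>I. ((\<lambda>n. U (fs n) (hs k) 0 (xs n)) \<longlongrightarrow> \<xi> k) sequentially) \<longrightarrow>
            (\<forall>k\<in>I. U f (hs k) 0 (\<xi> 0) = \<xi> k)))"

definition complete_bounded_trajectory ::
  "(real \<Rightarrow> real \<Rightarrow> 'x::real_normed_vector \<Rightarrow> 'x) \<Rightarrow> (real \<Rightarrow> 'x) \<Rightarrow> bool" where
  "complete_bounded_trajectory V u \<longleftrightarrow>
     bounded (range u) \<and> (\<forall>\<tau> s. \<tau> \<le> s \<longrightarrow> u s = V s \<tau> (u \<tau>))"

end

theory Submission
  imports Defs "HOL-Library.Diagonal_Subsequence"
begin

text \<open>Everything rests on one extraction principle: if \<open>x\<^sub>n\<close> is bounded and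
  \<open>\<tau>\<^sub>n \<longrightarrow> -\<infinity>\<close>, then a subsequence of \<open>U\<^bsub>f\<^sub>n\<^esub>(0, \<tau>\<^sub>n) x\<^sub>n\<close> converges to \<open>u(0)\<close> for a
  complete bounded trajectory \<open>u\<close> of some \<open>U\<^sub>f\<close>, \<open>f \<in> \<H>(g)\<close>.  Compactness of the hull
  gives \<open>f\<^sub>n \<longrightarrow> f\<close>; total dissipativity makes each sequence \<open>U\<^bsub>f\<^sub>n\<^esub>(t, \<tau>\<^sub>n) x\<^sub>n\<close>
  precompact, so a diagonal argument gives limits \<open>\<phi>(t)\<close> along a countable grid of times
  \<open>-m h + h\<^sub>k\<close>; asymptotic closedness, applied to the translated symbols \<open>T(-m h) f\<^sub>n\<close>,
  shows that \<open>\<phi>(-m h)\<close> is a backward orbit of \<open>U\<^sub>f\<close>, which extends to a complete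
  trajectory, bounded again by dissipativity.  Applied to points of complete trajectories this
  gives compactness of the set of their values at time 0, and applied to a sequence witnessing
  non-attraction it gives a contradiction.  Minimality holds because a complete bounded
  trajectory lies in every closed uniformly attracting set.\<close>

lemma compact_closure_range_eventually_covered:
  fixes v :: "nat \<Rightarrow> 'x::{metric_space,complete_space}"
  assumes covered: "\<And>e. e > 0 \<Longrightarrow>
    \<exists>K. finite K \<and> eventually (\<lambda>n. v n \<in> (\<Union>x\<in>K. ball x e)) sequentially"
  shows "compact (closure (range v))"
  unfolding compact_eq_totally_bounded
proof (intro conjI allI impI)
  show "complete (closure (range v))"
    by (simp add: complete_eq_closed)
  fix e :: real
  assume "e > 0"
  then obtain K N where "finite K" and K: "\<And>n. n \<ge> N \<Longrightarrow> v n \<in> (\<Union>x\<in>K. ball x (e/2))"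
    using covered[of "e/2"] by (auto simp: eventually_sequentially)
  let ?K = "K \<union> v ` {..<N}"
  have "v n \<in> (\<Union>x\<in>?K. cball x (e/2))" for n
  proof (cases "n < N")
    case True
    then have "v n \<in> ?K" by simp
    moreover have "v n \<in> cball (v n) (e/2)" using \<open>e > 0\<close> by simp
    ultimately show ?thesis by blast
  next
    case False
    then obtain x where "x \<in> K" "v n \<in> ball x (e/2)" using K[of n] by auto
    then show ?thesis by (auto intro!: bexI[of _ x])
  qed
  then have "range v \<subseteq> (\<Union>x\<in>?K. cball x (e/2))"
    by blast
  moreover have "closed (\<Union>x\<in>?K. cball x (e/2))"
    using \<open>finite K\<close> by (intro closed_UN) auto
  ultimately have "closure (range v) \<subseteq> (\<Union>x\<in>?K. cball x (e/2))"
    by (rule closure_minimal)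
  also have "\<dots> \<subseteq> (\<Union>x\<in>?K. ball x e)"
    using \<open>e > 0\<close> by (intro UN_mono) auto
  finally show "\<exists>K. finite K \<and> closure (range v) \<subseteq> (\<Union>x\<in>K. ball x e)"
    using \<open>finite K\<close> by (intro exI[of _ ?K]) simp
qed

lemma eventually_covered_convergent_subseq:
  fixes v :: "nat \<Rightarrow> 'x::{metric_space,complete_space}"
  assumes "\<And>e. e > 0 \<Longrightarrow>
    \<exists>K. finite K \<and> eventually (\<lambda>n. v n \<in> (\<Union>x\<in>K. ball x e)) sequentially"
  shows "\<exists>r. strict_mono r \<and> convergent (v \<circ> r)"
proof -
  have "seq_compact (closure (range v))"
    using assms by (intro compact_imp_seq_compact compact_closure_range_eventually_covered)
  moreover have "\<forall>n. v n \<in> closure (range v)"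
    using closure_subset by fast
  ultimately obtain l r where "strict_mono r" "(v \<circ> r) \<longlonglongrightarrow> l"
    by (rule seq_compactE) (rule that)
  then show ?thesis
    by (blast intro: convergentI)
qed

lemma diagonal_convergent_subseq:
  fixes w :: "nat \<Rightarrow> nat \<Rightarrow> 'x::{metric_space,complete_space}"
  assumes covered: "\<And>j e. e > 0 \<Longrightarrow>
    \<exists>K. finite K \<and> eventually (\<lambda>n. w n j \<in> (\<Union>x\<in>K. ball x e)) sequentially"
  shows "\<exists>r. strict_mono r \<and> (\<forall>j. convergent (\<lambda>n. w (r n) j))"
proof -
  interpret subseqs "\<lambda>j r. convergent (\<lambda>n. w (r n) j)"
  proof
    fix j and s :: "nat \<Rightarrow> nat"
    assume s: "strict_mono s"
    have "\<exists>r. strict_mono r \<and> convergent ((\<lambda>n. w (s n) j) \<circ> r)"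
    proof (rule eventually_covered_convergent_subseq)
      fix e :: real
      assume "e > 0"
      then obtain K where "finite K" and K: "eventually (\<lambda>n. w n j \<in> (\<Union>x\<in>K. ball x e)) sequentially"
        using covered by blast
      have "eventually (\<lambda>n. w (s n) j \<in> (\<Union>x\<in>K. ball x e)) sequentially"
        by (rule eventually_subseq[OF s K])
      with \<open>finite K\<close> show "\<exists>K. finite K \<and> eventually (\<lambda>n. w (s n) j \<in> (\<Union>x\<in>K. ball x e)) sequentially"
        by (intro exI conjI)
    qed
    then show "\<exists>r. strict_mono r \<and> convergent (\<lambda>n. w ((s \<circ> r) n) j)"
      by (simp add: o_def)
  qed
  have "convergent (\<lambda>n. w (diagseq n) j)" for j
  proof -
    have "convergent (\<lambda>n. w ((diagseq \<circ> (+) (Suc j)) n) j)"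
    proof (rule diagseq_holds)
      fix r s n
      assume "strict_mono (r :: nat \<Rightarrow> nat)" and "convergent (\<lambda>x. w (s x) n)"
      then show "convergent (\<lambda>x. w ((s \<circ> r) x) n)"
        unfolding convergent_def o_def using LIMSEQ_subseq_LIMSEQ[unfolded o_def] by fast
    qed
    then obtain l where "(\<lambda>n. w (diagseq (n + Suc j)) j) \<longlonglongrightarrow> l"
      by (auto simp: convergent_def add.commute)
    then have "(\<lambda>n. w (diagseq n) j) \<longlonglongrightarrow> l"
      by (rule LIMSEQ_offset)
    then show ?thesis
      by (rule convergentI)
  qed
  with subseq_diagseq show ?thesis
    by blast
qed

lemma is_process_comp:
  assumes "is_process V" "\<tau> \<le> s" "s \<le> t"
  shows "V t \<tau> x = V t s (V s \<tau> x)"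
  using assms unfolding is_process_def by (metis comp_apply)

lemma is_process_id:
  assumes "is_process V"
  shows "V t t x = x"
  using assms unfolding is_process_def by simp

lemma is_process_backward_chain:
  assumes V: "is_process V" and h: "h > 0"
    and chain: "\<And>m. V (- real m * h) (- real (Suc m) * h) (a (Suc m)) = a m"
  shows "V (- real m * h) (- real (m + j) * h) (a (m + j)) = a m"
proof (induction j)
  case 0
  show ?case by (simp add: is_process_id[OF V])
next
  case (Suc j)
  have "V (- real m * h) (- real (Suc (m + j)) * h) (a (Suc (m + j)))
      = V (- real m * h) (- real (m + j) * h)
          (V (- real (m + j) * h) (- real (Suc (m + j)) * h) (a (Suc (m + j))))"
    by (rule is_process_comp[OF V]) (use h in \<open>simp_all add: algebra_simps\<close>)
  also have "\<dots> = V (- real m * h) (- real (m + j) * h) (a (m + j))"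
    by (simp only: chain)
  also have "\<dots> = a m"
    by (rule Suc.IH)
  finally show ?case
    by (simp only: add_Suc_right)
qed

lemma is_process_trajectory_through_backward_chain:
  assumes V: "is_process V" and h: "h > 0"
    and chain: "\<And>m. V (- real m * h) (- real (Suc m) * h) (a (Suc m)) = a m"
  obtains u where "\<And>\<tau> s. \<tau> \<le> s \<Longrightarrow> u s = V s \<tau> (u \<tau>)"
    and "\<And>m t. - real m * h \<le> t \<Longrightarrow> u t = V t (- real m * h) (a m)"
proof -
  define N where "N t = nat \<lceil>- t / h\<rceil>" for t
  define u where "u t = V t (- real (N t) * h) (a (N t))" for t
  have N_le: "- real (N t) * h \<le> t" for t
  proof -
    have "- t / h \<le> real (N t)"
      unfolding N_def by (rule real_nat_ceiling_ge)
    then have "- t \<le> real (N t) * h"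
      by (subst (asm) pos_divide_le_eq[OF h])
    then show ?thesis
      by simp
  qed
  have u_eq: "u t = V t (- real m * h) (a m)" if "- real m * h \<le> t" for m t
  proof -
    have "- t / h \<le> real m"
      by (rule iffD2[OF pos_divide_le_eq[OF h]]) (use that in simp)
    then have "N t \<le> m"
      by (simp add: N_def nat_le_iff ceiling_le_iff)
    then obtain j where m: "m = N t + j"
      using le_iff_add by blast
    have "V (- real (N t) * h) (- real m * h) (a m) = a (N t)"
      unfolding m by (rule is_process_backward_chain[where a = a, OF V h chain])
    then have "u t = V t (- real (N t) * h) (V (- real (N t) * h) (- real m * h) (a m))"
      by (simp only: u_def)
    also have "\<dots> = V t (- real m * h) (a m)"
      by (rule is_process_comp[OF V, symmetric]) (use h N_le \<open>N t \<le> m\<close> in \<open>auto intro: mult_right_mono\<close>)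
    finally show ?thesis .
  qed
  show ?thesis
  proof (rule that[OF _ u_eq])
    fix \<tau> s :: real
    assume "\<tau> \<le> s"
    then have "u s = V s (- real (N \<tau>) * h) (a (N \<tau>))"
      using N_le[of \<tau>] by (intro u_eq) linarith
    also have "\<dots> = V s \<tau> (u \<tau>)"
      unfolding u_def using N_le \<open>\<tau> \<le> s\<close> by (rule is_process_comp[OF V])
    finally show "u s = V s \<tau> (u \<tau>)" .
  qed
qed

lemma complete_bounded_trajectoryD:
  assumes "complete_bounded_trajectory V u"
  shows "bounded (range u)" and "\<tau> \<le> s \<Longrightarrow> u s = V s \<tau> (u \<tau>)"
  using assms unfolding complete_bounded_trajectory_def by auto

lemma uniformly_totally_dissipativeE:
  assumes "uniformly_totally_dissipative \<Sigma> U" "bounded C" "e > 0"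
  obtains M te where "finite M"
    "\<And>f t \<tau>. f \<in> \<Sigma> \<Longrightarrow> t - \<tau> \<ge> te \<Longrightarrow> U f t \<tau> ` C \<subseteq> (\<Union>m\<in>M. ball m e)"
  using assms unfolding uniformly_totally_dissipative_def uniformly_absorbing_def by meson

lemma uniformly_totally_dissipative_bounded_absorbing:
  assumes "uniformly_totally_dissipative \<Sigma> U"
  obtains B where "bounded B" "uniformly_absorbing \<Sigma> U B"
  using assms unfolding uniformly_totally_dissipative_def by (meson bounded_UN bounded_ball zero_less_one)

lemma uniformly_absorbing_complete_bounded_trajectory:
  assumes B: "uniformly_absorbing \<Sigma> U B" and "f \<in> \<Sigma>"
    and u: "complete_bounded_trajectory (U f) u"
  shows "u t \<in> B"
proof -
  obtain te where te: "\<And>t \<tau>. t - \<tau> \<ge> te \<Longrightarrow> U f t \<tau> ` range u \<subseteq> B"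
    using B complete_bounded_trajectoryD(1)[OF u] \<open>f \<in> \<Sigma>\<close>
    unfolding uniformly_absorbing_def by meson
  have "u t = U f t (t - \<bar>te\<bar>) (u (t - \<bar>te\<bar>))"
    using u by (rule complete_bounded_trajectoryD) simp
  also have "\<dots> \<in> B"
    using te[of t "t - \<bar>te\<bar>"] by (simp add: image_subset_iff)
  finally show ?thesis .
qed

lemma uniformly_attracting_complete_bounded_trajectory:
  assumes "closed K" and K: "uniformly_attracting \<Sigma> U K" and "f \<in> \<Sigma>"
    and u: "complete_bounded_trajectory (U f) u"
  shows "u t \<in> K"
proof -
  have "u t \<in> closure K"
    unfolding closure_approachable
  proof (intro allI impI)
    fix e :: real
    assume "e > 0"
    obtain T where T: "\<forall>f\<in>\<Sigma>. \<forall>t \<tau>. t - \<tau> \<ge> T \<longrightarrow>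
        (\<forall>x\<in>range u. \<exists>\<xi>\<in>K. norm (U f t \<tau> x - \<xi>) < e)"
      using K[unfolded uniformly_attracting_def, rule_format, of "range u" e]
        complete_bounded_trajectoryD(1)[OF u] \<open>e > 0\<close> by auto
    have "\<exists>\<xi>\<in>K. norm (U f t (t - \<bar>T\<bar>) (u (t - \<bar>T\<bar>)) - \<xi>) < e"
      by (rule T[rule_format, OF \<open>f \<in> \<Sigma>\<close>]) simp_all
    then obtain \<xi> where "\<xi> \<in> K" and "norm (U f t (t - \<bar>T\<bar>) (u (t - \<bar>T\<bar>)) - \<xi>) < e"
      by blast
    moreover have "u t = U f t (t - \<bar>T\<bar>) (u (t - \<bar>T\<bar>))"
      using u by (rule complete_bounded_trajectoryD) simp
    ultimately show "\<exists>\<xi>\<in>K. dist \<xi> (u t) < e"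
      by (auto simp: dist_norm norm_minus_commute)
  qed
  with \<open>closed K\<close> show ?thesis
    by simp
qed

lemma uniformly_totally_dissipative_diagonal_subseq:
  fixes U :: "'f \<Rightarrow> real \<Rightarrow> real \<Rightarrow> 'x::banach \<Rightarrow> 'x" and ts :: "nat \<Rightarrow> real"
  assumes diss: "uniformly_totally_dissipative \<Sigma> U" and "bounded C"
    and fs: "\<And>n. fs n \<in> \<Sigma>" and xs: "\<And>n. xs n \<in> C"
    and \<tau>s: "filterlim \<tau>s at_bot sequentially"
  shows "\<exists>r. strict_mono r \<and> (\<forall>j. convergent (\<lambda>n. U (fs (r n)) (ts j) (\<tau>s (r n)) (xs (r n))))"
proof -
  have "\<exists>K. finite K \<and>
      eventually (\<lambda>n. U (fs n) (ts j) (\<tau>s n) (xs n) \<in> (\<Union>x\<in>K. ball x e)) sequentially"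
    if e: "e > 0" for j e
  proof -
    obtain M te where "finite M"
      and M: "\<And>f t \<tau>. f \<in> \<Sigma> \<Longrightarrow> t - \<tau> \<ge> te \<Longrightarrow> U f t \<tau> ` C \<subseteq> (\<Union>m\<in>M. ball m e)"
      using diss \<open>bounded C\<close> e by (rule uniformly_totally_dissipativeE) (rule that)
    have "eventually (\<lambda>n. \<tau>s n \<le> ts j - te) sequentially"
      using \<tau>s by (simp add: filterlim_at_bot)
    then have "eventually (\<lambda>n. U (fs n) (ts j) (\<tau>s n) (xs n) \<in> (\<Union>m\<in>M. ball m e)) sequentially"
    proof (rule eventually_mono)
      fix n
      assume "\<tau>s n \<le> ts j - te"
      then have "U (fs n) (ts j) (\<tau>s n) ` C \<subseteq> (\<Union>m\<in>M. ball m e)"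
        by (intro M fs) simp
      then show "U (fs n) (ts j) (\<tau>s n) (xs n) \<in> (\<Union>m\<in>M. ball m e)"
        using xs by blast
    qed
    with \<open>finite M\<close> show ?thesis
      by (intro exI conjI)
  qed
  then show ?thesis
    using diagonal_convergent_subseq[of "\<lambda>n j. U (fs n) (ts j) (\<tau>s n) (xs n)"] by simp
qed

lemma bounded_trajectory_through_bounded_chain:
  assumes diss: "uniformly_totally_dissipative \<Sigma> U" and "f \<in> \<Sigma>" and "h > 0"
    and "bounded D" and a: "\<And>m. a m \<in> D"
    and u: "\<And>m t. - real m * h \<le> t \<Longrightarrow> u t = U f t (- real m * h) (a m)"
  shows "bounded (range u)"
proof -
  obtain B where "bounded B" and B: "uniformly_absorbing \<Sigma> U B"
    using diss by (rule uniformly_totally_dissipative_bounded_absorbing)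
  then obtain te where te: "\<forall>f\<in>\<Sigma>. \<forall>t \<tau>. t - \<tau> \<ge> te \<longrightarrow> U f t \<tau> ` D \<subseteq> B"
    using \<open>bounded D\<close> unfolding uniformly_absorbing_def by blast
  have "u t \<in> B" for t
  proof -
    obtain m where m: "\<bar>te\<bar> - t < real m * h"
      using reals_Archimedean3[OF \<open>h > 0\<close>] by blast
    then have "u t = U f t (- real m * h) (a m)"
      by (intro u) linarith
    also have "\<dots> \<in> U f t (- real m * h) ` D"
      using a by (rule imageI)
    also have "\<dots> \<subseteq> B"
      using te \<open>f \<in> \<Sigma>\<close> m abs_ge_self[of te] by auto
    finally show ?thesis .
  qed
  then have "range u \<subseteq> B"
    by blast
  with \<open>bounded B\<close> show ?thesis
    by (rule bounded_subset)
qed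

lemma uniformly_absorbing_limit_in_closure:
  assumes B: "uniformly_absorbing \<Sigma> U B" and "bounded C"
    and fs: "\<And>n. fs n \<in> \<Sigma>" and xs: "\<And>n. xs n \<in> C"
    and \<tau>s: "filterlim \<tau>s at_bot sequentially"
    and lim: "((\<lambda>n. U (fs n) t (\<tau>s n) (xs n)) \<longlongrightarrow> y) sequentially"
  shows "y \<in> closure B"
proof -
  obtain te where te: "\<forall>f\<in>\<Sigma>. \<forall>t \<tau>. t - \<tau> \<ge> te \<longrightarrow> U f t \<tau> ` C \<subseteq> B"
    using B \<open>bounded C\<close> unfolding uniformly_absorbing_def by blast
  have "eventually (\<lambda>n. \<tau>s n \<le> t - te) sequentially"
    using \<tau>s by (simp add: filterlim_at_bot)
  then have "eventually (\<lambda>n. U (fs n) t (\<tau>s n) (xs n) \<in> closure B) sequentially"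
  proof (rule eventually_mono)
    fix n
    assume "\<tau>s n \<le> t - te"
    then have "U (fs n) t (\<tau>s n) ` C \<subseteq> B"
      using te fs by simp
    then show "U (fs n) t (\<tau>s n) (xs n) \<in> closure B"
      using xs closure_subset by blast
  qed
  with lim show ?thesis
    by (intro Lim_in_closed_set[of "closure B"]) simp_all
qed

lemma filterlim_at_bot_below_minus_real:
  fixes \<tau>s :: "nat \<Rightarrow> real"
  assumes "\<And>n. \<tau>s n \<le> - real n"
  shows "filterlim \<tau>s at_bot sequentially"
  unfolding filterlim_at_bot
proof
  fix Z :: real
  show "eventually (\<lambda>n. \<tau>s n \<le> Z) sequentially"
  proof (rule eventually_sequentiallyI)
    fix n
    assume "nat \<lceil>- Z\<rceil> \<le> n"
    then have "- Z \<le> real n"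
      by linarith
    with assms[of n] show "\<tau>s n \<le> Z"
      by linarith
  qed
qed

lemma filterlim_at_bot_subseq:
  assumes "strict_mono r" "filterlim \<tau>s at_bot sequentially"
  shows "filterlim (\<lambda>n. \<tau>s (r n)) at_bot sequentially"
  using filterlim_compose[OF assms(2) filterlim_subseq[OF assms(1)]] by (simp add: o_def)

lemma is_process_pullback_tendsto:
  assumes V: "\<And>n. is_process (V n)" and \<tau>s: "filterlim \<tau>s at_bot sequentially" and "s \<le> t"
    and lim: "((\<lambda>n. V n t (\<tau>s n) (xs n)) \<longlongrightarrow> y) sequentially"
  shows "((\<lambda>n. V n t s (V n s (\<tau>s n) (xs n))) \<longlongrightarrow> y) sequentially"
proof -
  have "eventually (\<lambda>n. \<tau>s n \<le> s) sequentially"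
    using \<tau>s by (simp add: filterlim_at_bot)
  then have "eventually (\<lambda>n. V n t (\<tau>s n) (xs n) = V n t s (V n s (\<tau>s n) (xs n))) sequentially"
    by (rule eventually_mono) (rule is_process_comp[OF V _ \<open>s \<le> t\<close>])
  with lim show ?thesis
    by (rule Lim_transform_eventually)
qed

locale hull_process =
  fixes L :: "(real \<Rightarrow> 'y) metric"
    and g :: "real \<Rightarrow> 'y"
    and U :: "(real \<Rightarrow> 'y) \<Rightarrow> real \<Rightarrow> real \<Rightarrow> 'x::banach \<Rightarrow> 'x"
  assumes hull_compact: "compactin (mtopology_of L) (trhull L g)"
    and T_cont: "\<And>h. transl h ` trhull L g \<subseteq> trhull L g \<and>
        continuous_map (subtopology (mtopology_of L) (trhull L g))
                       (subtopology (mtopology_of L) (trhull L g)) (transl h)"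
    and proc: "\<And>f. f \<in> trhull L g \<Longrightarrow> is_process (U f)"
    and transl_id: "\<And>f h t \<tau>. f \<in> trhull L g \<Longrightarrow> \<tau> \<le> t \<Longrightarrow>
        U f (h + t) (h + \<tau>) = U (transl h f) t \<tau>"
    and diss: "uniformly_totally_dissipative (trhull L g) U"
    and aclosed: "asymptotically_closed L (trhull L g) U"
begin

lemma hull_seq_compact:
  fixes fs :: "nat \<Rightarrow> real \<Rightarrow> 'y"
  assumes "\<And>n. fs n \<in> trhull L g"
  obtains r f where "strict_mono r" "f \<in> trhull L g"
    "limitin (mtopology_of L) (fs \<circ> r) f sequentially"
proof -
  have rng: "range fs \<subseteq> trhull L g"
    using assms by blast
  have "\<forall>\<sigma>::nat \<Rightarrow> real \<Rightarrow> 'y. range \<sigma> \<subseteq> trhull L g \<longrightarrow> (\<exists>f r. f \<in> trhull L g \<and> strict_mono r \<and>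
      limitin (Metric_space.mtopology (mspace L) (mdist L)) (\<sigma> \<circ> r) f sequentially)"
    using hull_compact
    by (simp add: mtopology_of_def Metric_space.compactin_sequentially[OF Metric_space_mspace_mdist])
  from this[rule_format, OF rng] obtain f r where "f \<in> trhull L g" "strict_mono r"
    "limitin (mtopology_of L) (fs \<circ> r) f sequentially"
    unfolding mtopology_of_def by (elim exE conjE)
  then show ?thesis
    by (intro that)
qed

lemma transl_limitin:
  fixes fs :: "nat \<Rightarrow> real \<Rightarrow> 'y"
  assumes "\<And>n. fs n \<in> trhull L g" "f \<in> trhull L g"
    and "limitin (mtopology_of L) fs f sequentially"
  shows "limitin (mtopology_of L) (\<lambda>n. transl s (fs n)) (transl s f) sequentially"
proof -
  have "limitin (subtopology (mtopology_of L) (trhull L g)) fs f sequentially"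
    using assms by (simp add: limitin_subtopology)
  with T_cont[of s] have "limitin (subtopology (mtopology_of L) (trhull L g)) (transl s \<circ> fs) (transl s f) sequentially"
    by (blast intro: continuous_map_limit)
  then show ?thesis
    by (simp add: limitin_subtopology o_def)
qed

text \<open>The offsets \<open>h\<^sub>k\<close> of asymptotic closedness, transported to an arbitrary initial
  time \<open>s\<close> by applying the definition to the translates \<open>T(s) f\<^sub>n\<close>.\<close>

lemma asymptotically_closed_offsets:
  obtains I hs where "(0::nat) \<in> I" "1 \<in> I" "hs 0 = (0::real)" "hs 1 > 0"
    "\<And>k. k \<in> I \<Longrightarrow> hs k \<ge> 0"
    and "\<forall>fs f xs \<xi>. (\<forall>n. fs n \<in> trhull L g) \<and> f \<in> trhull L g \<and>
        limitin (mtopology_of L) fs f sequentially \<and>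
        (\<forall>k\<in>I. ((\<lambda>n. U (fs n) (hs k) 0 (xs n)) \<longlongrightarrow> \<xi> k) sequentially) \<longrightarrow>
        (\<forall>k\<in>I. U f (hs k) 0 (\<xi> 0) = \<xi> k)"
proof -
  obtain I hs where I: "I = UNIV \<or> (\<exists>n\<ge>2. I = {..<n})" and hs0: "hs (0::nat) = (0::real)"
    and hs_mono: "\<forall>i\<in>I. \<forall>j\<in>I. i < j \<longrightarrow> hs i < hs j"
    and closed: "\<forall>fs f xs \<xi>. (\<forall>n. fs n \<in> trhull L g) \<and> f \<in> trhull L g \<and>
        limitin (mtopology_of L) fs f sequentially \<and>
        (\<forall>k\<in>I. ((\<lambda>n. U (fs n) (hs k) 0 (xs n)) \<longlongrightarrow> \<xi> k) sequentially) \<longrightarrow>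
        (\<forall>k\<in>I. U f (hs k) 0 (\<xi> 0) = \<xi> k)"
    using aclosed unfolding asymptotically_closed_def by (elim exE conjE)
  have "0 \<in> I" "1 \<in> I"
    using I by auto
  moreover from this have "hs 1 > 0"
    using hs_mono hs0 by force
  moreover have "hs k \<ge> 0" if "k \<in> I" for k
  proof (cases "k = 0")
    case False
    then have "hs 0 < hs k"
      using hs_mono \<open>0 \<in> I\<close> that by blast
    then show ?thesis
      using hs0 by simp
  qed (simp add: hs0)
  ultimately show ?thesis
    using hs0 closed by (intro that)
qed

lemma asymptotically_closed_shifted:
  obtains h H where "h > 0" "0 \<in> H" "h \<in> H" "countable H" "H \<subseteq> {0..}"
    and "\<And>fs f ys \<xi> s \<eta>. (\<And>n. fs n \<in> trhull L g) \<Longrightarrow> f \<in> trhull L g \<Longrightarrow>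
      limitin (mtopology_of L) fs f sequentially \<Longrightarrow>
      (\<And>\<eta>. \<eta> \<in> H \<Longrightarrow> ((\<lambda>n. U (fs n) (s + \<eta>) s (ys n)) \<longlongrightarrow> \<xi> \<eta>) sequentially) \<Longrightarrow>
      \<eta> \<in> H \<Longrightarrow> U f (s + \<eta>) s (\<xi> 0) = \<xi> \<eta>"
proof (rule asymptotically_closed_offsets)
  fix I hs
  assume "(0::nat) \<in> I" "1 \<in> I" and hs0: "hs 0 = (0::real)" and hs1: "hs 1 > 0"
    and hs_nonneg: "\<And>k. k \<in> I \<Longrightarrow> hs k \<ge> 0"
    and closed: "\<forall>fs f xs \<xi>. (\<forall>n. fs n \<in> trhull L g) \<and> f \<in> trhull L g \<and>
        limitin (mtopology_of L) fs f sequentially \<and>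
        (\<forall>k\<in>I. ((\<lambda>n. U (fs n) (hs k) 0 (xs n)) \<longlongrightarrow> \<xi> k) sequentially) \<longrightarrow>
        (\<forall>k\<in>I. U f (hs k) 0 (\<xi> 0) = \<xi> k)"
  show ?thesis
  proof (rule that[of "hs 1" "hs ` I"])
    show "hs 1 > 0"
      by (rule hs1)
    show "0 \<in> hs ` I"
      using \<open>0 \<in> I\<close> hs0 by (metis image_eqI)
    show "hs 1 \<in> hs ` I"
      using \<open>1 \<in> I\<close> by (rule imageI)
    show "countable (hs ` I)"
      by (intro countable_image countableI_type)
    show "hs ` I \<subseteq> {0..}"
      using hs_nonneg by auto
    fix fs f ys \<xi> s \<eta>
    assume fs: "\<And>n. fs n \<in> trhull L g" and f: "f \<in> trhull L g"
      and lim: "limitin (mtopology_of L) fs f sequentially"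
      and conv: "\<And>\<eta>. \<eta> \<in> hs ` I \<Longrightarrow> ((\<lambda>n. U (fs n) (s + \<eta>) s (ys n)) \<longlongrightarrow> \<xi> \<eta>) sequentially"
      and "\<eta> \<in> hs ` I"
    then obtain k where "k \<in> I" and \<eta>: "\<eta> = hs k"
      by blast
    have shift: "U (transl s f') (hs k) 0 = U f' (s + hs k) s" if "f' \<in> trhull L g" "k \<in> I" for f' k
      using transl_id[OF that(1) hs_nonneg[OF that(2)], of s] by simp
    have "\<forall>n. transl s (fs n) \<in> trhull L g" "transl s f \<in> trhull L g"
      using T_cont[of s] fs f by blast+
    moreover have "limitin (mtopology_of L) (\<lambda>n. transl s (fs n)) (transl s f) sequentially"
      using fs f lim by (rule transl_limitin)
    moreover have "\<forall>k\<in>I. ((\<lambda>n. U (transl s (fs n)) (hs k) 0 (ys n)) \<longlongrightarrow> (\<xi> \<circ> hs) k) sequentially"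
      using conv shift[OF fs] by simp
    ultimately have "\<forall>k\<in>I. U (transl s f) (hs k) 0 ((\<xi> \<circ> hs) 0) = (\<xi> \<circ> hs) k"
      using closed[rule_format, of "\<lambda>n. transl s (fs n)" "transl s f" ys "\<xi> \<circ> hs"] by blast
    with \<open>k \<in> I\<close> show "U f (s + \<eta>) s (\<xi> 0) = \<xi> \<eta>"
      using hs0 by (simp add: \<eta> shift[OF f])
  qed
qed

text \<open>Limits along the grid \<open>{-m h + \<eta> | m \<in> \<nat>, \<eta> \<in> H}\<close> form a backward orbit: apply
  the shifted closedness at \<open>s = -(m+1) h\<close> and read it off at \<open>\<eta> = h\<close>.\<close>

lemma asymptotically_closed_grid:
  obtains h G where "h > 0" "countable G" "\<And>m. - real m * h \<in> G"
    and "\<And>fs f \<tau>s xs \<phi> m. (\<And>n. fs n \<in> trhull L g) \<Longrightarrow> f \<in> trhull L g \<Longrightarrow>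
      limitin (mtopology_of L) fs f sequentially \<Longrightarrow> filterlim \<tau>s at_bot sequentially \<Longrightarrow>
      (\<And>t. t \<in> G \<Longrightarrow> ((\<lambda>n. U (fs n) t (\<tau>s n) (xs n)) \<longlongrightarrow> \<phi> t) sequentially) \<Longrightarrow>
      U f (- real m * h) (- real (Suc m) * h) (\<phi> (- real (Suc m) * h)) = \<phi> (- real m * h)"
proof (rule asymptotically_closed_shifted)
  fix h H
  assume "h > 0" "0 \<in> H" "h \<in> H" "countable H" and H: "H \<subseteq> {0..}"
    and closed: "\<And>fs f ys \<xi> s \<eta>. (\<And>n. fs n \<in> trhull L g) \<Longrightarrow> f \<in> trhull L g \<Longrightarrow>
      limitin (mtopology_of L) fs f sequentially \<Longrightarrow>
      (\<And>\<eta>. \<eta> \<in> H \<Longrightarrow> ((\<lambda>n. U (fs n) (s + \<eta>) s (ys n)) \<longlongrightarrow> \<xi> \<eta>) sequentially) \<Longrightarrow>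
      \<eta> \<in> H \<Longrightarrow> U f (s + \<eta>) s (\<xi> 0) = \<xi> \<eta>"
  define G where "G = (\<lambda>(m, \<eta>). - real m * h + \<eta>) ` (UNIV \<times> H)"
  have grid: "- real m * h + \<eta> \<in> G" if "\<eta> \<in> H" for m \<eta>
    unfolding G_def using that by (intro image_eqI[of _ _ "(m, \<eta>)"]) simp_all
  show ?thesis
  proof (rule that[of h G])
    show "h > 0"
      by (rule \<open>h > 0\<close>)
    show "countable G"
      unfolding G_def using \<open>countable H\<close> by (intro countable_image countable_SIGMA) simp_all
    show "- real m * h \<in> G" for m
      using grid[OF \<open>0 \<in> H\<close>] by simp
    fix fs f \<tau>s xs \<phi> m
    assume fs: "\<And>n. fs n \<in> trhull L g" and f: "f \<in> trhull L g"
      and lim: "limitin (mtopology_of L) fs f sequentially"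
      and \<tau>s: "filterlim \<tau>s at_bot sequentially"
      and conv: "\<And>t. t \<in> G \<Longrightarrow> ((\<lambda>n. U (fs n) t (\<tau>s n) (xs n)) \<longlongrightarrow> \<phi> t) sequentially"
    define s where "s = - real (Suc m) * h"
    have "((\<lambda>n. U (fs n) (s + \<eta>) s (U (fs n) s (\<tau>s n) (xs n))) \<longlongrightarrow> \<phi> (s + \<eta>)) sequentially"
      if "\<eta> \<in> H" for \<eta>
    proof (rule is_process_pullback_tendsto[where V = "\<lambda>n. U (fs n)"])
      show "is_process (U (fs n))" for n
        using fs by (rule proc)
      show "s \<le> s + \<eta>"
        using H that by auto
      show "((\<lambda>n. U (fs n) (s + \<eta>) (\<tau>s n) (xs n)) \<longlongrightarrow> \<phi> (s + \<eta>)) sequentially"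
        unfolding s_def by (intro conv grid that)
    qed (rule \<tau>s)
    then have "U f (s + h) s (\<phi> (s + 0)) = \<phi> (s + h)"
      by (rule closed[where \<xi> = "\<lambda>\<eta>. \<phi> (s + \<eta>)", OF fs f lim _ \<open>h \<in> H\<close>])
    moreover have "s + h = - real m * h"
      by (simp add: s_def algebra_simps)
    ultimately show "U f (- real m * h) (- real (Suc m) * h) (\<phi> (- real (Suc m) * h)) = \<phi> (- real m * h)"
      by (simp add: s_def)
  qed
qed

lemma pullback_convergent_subseq:
  fixes fs :: "nat \<Rightarrow> real \<Rightarrow> 'y"
  assumes "bounded C" and fs: "\<And>n. fs n \<in> trhull L g" and xs: "\<And>n. xs n \<in> C"
    and \<tau>s: "filterlim \<tau>s at_bot sequentially" and "countable G" "G \<noteq> {}"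
  obtains r f where "strict_mono r" "f \<in> trhull L g" "limitin (mtopology_of L) (fs \<circ> r) f sequentially"
    "\<And>t. t \<in> G \<Longrightarrow> convergent (\<lambda>n. U (fs (r n)) t (\<tau>s (r n)) (xs (r n)))"
proof -
  obtain r1 f where r1: "strict_mono r1" and f: "f \<in> trhull L g"
    and lim1: "limitin (mtopology_of L) (fs \<circ> r1) f sequentially"
    using fs by (rule hull_seq_compact)
  obtain r2 where r2: "strict_mono r2" and conv: "\<forall>j. convergent
      (\<lambda>n. U (fs (r1 (r2 n))) (from_nat_into G j) (\<tau>s (r1 (r2 n))) (xs (r1 (r2 n))))"
    using uniformly_totally_dissipative_diagonal_subseq[where fs = "\<lambda>n. fs (r1 n)"
        and xs = "\<lambda>n. xs (r1 n)" and \<tau>s = "\<lambda>n. \<tau>s (r1 n)" and ts = "from_nat_into G",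
        OF diss \<open>bounded C\<close> fs xs filterlim_at_bot_subseq[OF r1 \<tau>s]]
    by (elim exE conjE)
  show ?thesis
  proof (rule that[of "r1 \<circ> r2" f])
    show "strict_mono (r1 \<circ> r2)"
      using r1 r2 by (rule strict_mono_o)
    show "f \<in> trhull L g"
      by (rule f)
    show "limitin (mtopology_of L) (fs \<circ> (r1 \<circ> r2)) f sequentially"
      unfolding o_assoc by (rule limitin_subsequence[OF r2 lim1])
    fix t
    assume "t \<in> G"
    then have "t \<in> range (from_nat_into G)"
      using range_from_nat_into[OF \<open>G \<noteq> {}\<close> \<open>countable G\<close>] by simp
    then obtain j where "t = from_nat_into G j"
      by (rule rangeE)
    then show "convergent (\<lambda>n. U (fs ((r1 \<circ> r2) n)) t (\<tau>s ((r1 \<circ> r2) n)) (xs ((r1 \<circ> r2) n)))"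
      using conv by simp
  qed
qed

lemma complete_trajectory_from_pullback:
  fixes fs :: "nat \<Rightarrow> real \<Rightarrow> 'y"
  assumes "bounded C" and fs: "\<And>n. fs n \<in> trhull L g" and xs: "\<And>n. xs n \<in> C"
    and \<tau>s: "filterlim \<tau>s at_bot sequentially"
  obtains r f u where "strict_mono r" "f \<in> trhull L g" "complete_bounded_trajectory (U f) u"
    "((\<lambda>n. U (fs (r n)) 0 (\<tau>s (r n)) (xs (r n))) \<longlongrightarrow> u 0) sequentially"
proof (rule asymptotically_closed_grid)
  fix h G
  assume "h > 0" "countable G" and grid: "\<And>m. - real m * h \<in> G"
    and chain: "\<And>fs f \<tau>s xs \<phi> m. (\<And>n. fs n \<in> trhull L g) \<Longrightarrow> f \<in> trhull L g \<Longrightarrow>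
      limitin (mtopology_of L) fs f sequentially \<Longrightarrow> filterlim \<tau>s at_bot sequentially \<Longrightarrow>
      (\<And>t. t \<in> G \<Longrightarrow> ((\<lambda>n. U (fs n) t (\<tau>s n) (xs n)) \<longlongrightarrow> \<phi> t) sequentially) \<Longrightarrow>
      U f (- real m * h) (- real (Suc m) * h) (\<phi> (- real (Suc m) * h)) = \<phi> (- real m * h)"
  have "G \<noteq> {}"
    using grid by blast
  with \<open>bounded C\<close> fs xs \<tau>s \<open>countable G\<close> obtain r f where r: "strict_mono r"
    and f: "f \<in> trhull L g" and lim: "limitin (mtopology_of L) (fs \<circ> r) f sequentially"
    and conv: "\<And>t. t \<in> G \<Longrightarrow> convergent (\<lambda>n. U (fs (r n)) t (\<tau>s (r n)) (xs (r n)))"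
    by (rule pullback_convergent_subseq) (rule that)
  define \<phi> where "\<phi> t = lim (\<lambda>n. U (fs (r n)) t (\<tau>s (r n)) (xs (r n)))" for t
  have \<phi>: "((\<lambda>n. U (fs (r n)) t (\<tau>s (r n)) (xs (r n))) \<longlongrightarrow> \<phi> t) sequentially" if "t \<in> G" for t
    using conv[OF that] unfolding \<phi>_def by (simp add: convergent_LIMSEQ_iff)
  define a where "a m = \<phi> (- real m * h)" for m
  have "U f (- real m * h) (- real (Suc m) * h) (a (Suc m)) = a m" for m
    unfolding a_def using fs lim filterlim_at_bot_subseq[OF r \<tau>s] \<phi>
    by (intro chain[OF _ f]) (simp_all add: o_def)
  with proc[OF f] \<open>h > 0\<close> obtain u where traj: "\<And>\<tau> s. \<tau> \<le> s \<Longrightarrow> u s = U f s \<tau> (u \<tau>)"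
    and u: "\<And>m t. - real m * h \<le> t \<Longrightarrow> u t = U f t (- real m * h) (a m)"
    by (rule is_process_trajectory_through_backward_chain) (rule that)
  obtain B where "bounded B" and B: "uniformly_absorbing (trhull L g) U B"
    using diss by (rule uniformly_totally_dissipative_bounded_absorbing)
  have a_closure: "a m \<in> closure B" for m
    unfolding a_def
    by (rule uniformly_absorbing_limit_in_closure[where fs = "\<lambda>n. fs (r n)" and xs = "\<lambda>n. xs (r n)",
          OF B \<open>bounded C\<close> fs xs filterlim_at_bot_subseq[OF r \<tau>s] \<phi>[OF grid]])
  have "bounded (range u)"
    using diss f \<open>h > 0\<close> bounded_closure[OF \<open>bounded B\<close>] a_closure
  proof (rule bounded_trajectory_through_bounded_chain)
    show "u t = U f t (- real m * h) (a m)" if "- real m * h \<le> t" for m t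
      using that by (rule u)
  qed
  with traj have cbt: "complete_bounded_trajectory (U f) u"
    unfolding complete_bounded_trajectory_def by blast
  have "u 0 = \<phi> 0"
    using u[of 0 0] is_process_id[OF proc[OF f]] by (simp add: a_def)
  moreover have "0 \<in> G"
    using grid[of 0] by simp
  ultimately show thesis
    using \<phi> by (intro that[OF r f cbt]) simp
qed

definition kernel_section :: "'x set" where
  "kernel_section = (\<Union>f\<in>trhull L g. {u 0 | u. complete_bounded_trajectory (U f) u})"

lemma kernel_section_compact: "compact kernel_section"
  unfolding compact_eq_seq_compact_metric seq_compact_def
proof (intro allI impI)
  fix p :: "nat \<Rightarrow> 'x"
  assume "\<forall>n. p n \<in> kernel_section"
  then have "\<forall>n. \<exists>f u. f \<in> trhull L g \<and> complete_bounded_trajectory (U f) u \<and> p n = u 0"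
    unfolding kernel_section_def by blast
  then obtain F V where F: "\<And>n. F n \<in> trhull L g"
    and V: "\<And>n. complete_bounded_trajectory (U (F n)) (V n)" and p: "\<And>n. p n = V n 0"
    by metis
  obtain B where "bounded B" and B: "uniformly_absorbing (trhull L g) U B"
    using diss by (rule uniformly_totally_dissipative_bounded_absorbing)
  have "V n (- real n) \<in> B" for n
    using V by (rule uniformly_absorbing_complete_bounded_trajectory[OF B F])
  moreover have "filterlim (\<lambda>n. - real n) at_bot sequentially"
    by (rule filterlim_at_bot_below_minus_real) simp
  ultimately obtain r f u where "strict_mono r" "f \<in> trhull L g"
    "complete_bounded_trajectory (U f) u"
    and lim: "((\<lambda>n. U (F (r n)) 0 (- real (r n)) (V (r n) (- real (r n)))) \<longlongrightarrow> u 0) sequentially"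
    by (rule complete_trajectory_from_pullback[where xs = "\<lambda>n. V n (- real n)", OF \<open>bounded B\<close> F])
  moreover have "U (F n) 0 (- real n) (V n (- real n)) = p n" for n
    using complete_bounded_trajectoryD(2)[OF V, of "- real n" 0] by (simp add: p)
  ultimately show "\<exists>l\<in>kernel_section. \<exists>r. strict_mono r \<and> (p \<circ> r) \<longlonglongrightarrow> l"
    unfolding kernel_section_def by (auto simp: o_def)
qed

lemma kernel_section_uniformly_attracting: "uniformly_attracting (trhull L g) U kernel_section"
  unfolding uniformly_attracting_def
proof (intro allI impI, rule ccontr)
  fix C :: "'x set" and e :: real
  assume C: "bounded C \<and> C \<noteq> {}" and "e > 0"
  let ?near = "\<lambda>f t \<tau> x. \<exists>\<xi>\<in>kernel_section. norm (U f t \<tau> x - \<xi>) < e"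
  assume "\<not> (\<exists>T. \<forall>f\<in>trhull L g. \<forall>t \<tau>. t - \<tau> \<ge> T \<longrightarrow> (\<forall>x\<in>C. ?near f t \<tau> x))"
  then have "\<forall>n::nat. \<exists>f t \<tau> x. f \<in> trhull L g \<and> real n \<le> t - \<tau> \<and> x \<in> C \<and> \<not> ?near f t \<tau> x"
    by (meson not_le)
  then obtain F Tt Ta X where F: "\<And>n. F n \<in> trhull L g" and T: "\<And>n. real n \<le> Tt n - Ta n"
    and X: "\<And>n. X n \<in> C" and far: "\<And>n. \<not> ?near (F n) (Tt n) (Ta n) (X n)"
    by metis
  define gs where "gs n = transl (Tt n) (F n)" for n
  have gs: "gs n \<in> trhull L g" for n
    using T_cont[of "Tt n"] F[of n] unfolding gs_def by blast
  have shift: "U (F n) (Tt n) (Ta n) = U (gs n) 0 (Ta n - Tt n)" for n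
    using transl_id[OF F[of n], where h = "Tt n" and t = 0 and \<tau> = "Ta n - Tt n"] T[of n]
    by (simp add: gs_def)
  have "filterlim (\<lambda>n. Ta n - Tt n) at_bot sequentially"
    using T by (intro filterlim_at_bot_below_minus_real) (simp add: algebra_simps)
  then obtain r f u where "f \<in> trhull L g" "complete_bounded_trajectory (U f) u"
    and lim: "((\<lambda>n. U (gs (r n)) 0 (Ta (r n) - Tt (r n)) (X (r n))) \<longlongrightarrow> u 0) sequentially"
    using C by (elim conjE) (rule complete_trajectory_from_pullback[OF _ gs X], assumption+)
  then have "u 0 \<in> kernel_section"
    unfolding kernel_section_def by blast
  moreover obtain n where "norm (U (gs (r n)) 0 (Ta (r n) - Tt (r n)) (X (r n)) - u 0) < e"
    using lim \<open>e > 0\<close> unfolding LIMSEQ_iff by blast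
  ultimately show False
    using far[of "r n"] by (auto simp: shift)
qed

lemma kernel_section_subset:
  assumes "closed K" "uniformly_attracting (trhull L g) U K"
  shows "kernel_section \<subseteq> K"
  unfolding kernel_section_def
  using uniformly_attracting_complete_bounded_trajectory[OF assms] by blast

end

theorem theorem7p3:
  fixes L :: "(real \<Rightarrow> 'y) metric"
    and g :: "real \<Rightarrow> 'y"
    and U :: "(real \<Rightarrow> 'y) \<Rightarrow> real \<Rightarrow> real \<Rightarrow> 'x::banach \<Rightarrow> 'x"
  assumes g_tc: "translation_compact L g"
    and T_cont: "\<And>h. transl h ` trhull L g \<subseteq> trhull L g \<and>
        continuous_map (subtopology (mtopology_of L) (trhull L g))
                       (subtopology (mtopology_of L) (trhull L g)) (transl h)"
    and proc: "\<And>f. f \<in> trhull L g \<Longrightarrow> is_process (U f)"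
    and transl_id: "\<And>f h t \<tau>. f \<in> trhull L g \<Longrightarrow> \<tau> \<le> t \<Longrightarrow>
        U f (h + t) (h + \<tau>) = U (transl h f) t \<tau>"
    and diss: "uniformly_totally_dissipative (trhull L g) U"
    and aclosed: "asymptotically_closed L (trhull L g) U"
  shows "uniform_global_attractor (trhull L g) U
           (\<Union>f\<in>trhull L g. {u 0 | u. complete_bounded_trajectory (U f) u})"
proof -
  have "compactin (mtopology_of L) (trhull L g)"
    using g_tc unfolding translation_compact_def trhull_def by blast
  then interpret hull_process L g U
    using T_cont proc transl_id diss aclosed by unfold_locales
  show ?thesis
    unfolding uniform_global_attractor_def kernel_section_def[symmetric]
    using kernel_section_compact kernel_section_uniformly_attracting kernel_section_subset
    by (blast dest: compact_imp_closed)
qed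

end
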